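(* Let $Q$ be a connected quiver and $W$ a complex vector space of dimension $n$. The moduli space of invertible quiver representations $\mathcal{M}^{inv}_W(Q)=\mathcal{R}^{inv}_W(Q)/\!\!/G_W(Q)$ is isomorphic, as an affine algebraic variety, to the character variety $\mathrm{Hom}(F_r,\mathsf{GL}(n,\mathbb{C}))/\!\!/\mathsf{GL}(n,\mathbb{C})$, where $r=b_1(Q)$ and $F_r$ is the free group of rank $r$.
   Context: A quiver $Q=(Q_V,Q_A)$ is a finite directed graph; each arrow $a$ has head $h_a$ and tail $t_a$; $b_1(Q)$ is the rank of $H_1(Q,\mathbb{Z})$ of its underlying 1-dimensional CW complex. $\mathcal{R}_W(Q)=\bigoplus_{a\in Q_A}\mathrm{End}(W)$, and $G_W(Q)=\mathsf{GL}(W)^{Q_V}$ acts by $(g\cdot x)(a)=g_{h_a}x(a)g_{t_a}^{-1}$. $\mathcal{R}^{inv}_W(Q)\subset\mathcal{R}_W(Q)$ is the set of $x$ with $x(a)\in\mathsf{GL}(W)$ for all $a$; the GIT quotient is taken for the $G_W(Q)$-action. The character variety is the GIT quotient by simultaneous conjugation. *)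

theory Defs
  imports "HOL-Analysis.Analysis"
begin

text \<open>Tuples of n x n complex matrices indexed by 'i (only indices in a given set I matter).\<close>
type_synonym ('i, 'n) mtuple = "'i \<Rightarrow> complex^'n^'n"

text \<open>Generators of regular functions on an open subset of tuples of invertible matrices:
  polynomials in the matrix entries and in the inverses of the determinants.\<close>
inductive_set reg_gen :: "'i set \<Rightarrow> (('i \<Rightarrow> complex^'n::finite^'n) \<Rightarrow> complex) set"
  for I :: "'i set" where
  const: "(\<lambda>x. c) \<in> reg_gen I"
| coord: "i \<in> I \<Longrightarrow> (\<lambda>x. x i $ j $ k) \<in> reg_gen I"
| invdet: "i \<in> I \<Longrightarrow> (\<lambda>x. inverse (det (x i))) \<in> reg_gen I"
| add: "f \<in> reg_gen I \<Longrightarrow> g \<in> reg_gen I \<Longrightarrow> (\<lambda>x. f x + g x) \<in> reg_gen I"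
| mult: "f \<in> reg_gen I \<Longrightarrow> g \<in> reg_gen I \<Longrightarrow> (\<lambda>x. f x * g x) \<in> reg_gen I"

definition coord_ring :: "'i set \<Rightarrow> ('i \<Rightarrow> complex^'n::finite^'n) set
    \<Rightarrow> (('i \<Rightarrow> complex^'n^'n) \<Rightarrow> complex) set" where
  "coord_ring I X = (\<lambda>p. \<lambda>x. if x \<in> X then p x else 0) ` reg_gen I"

text \<open>Ring of invariants; its maximal spectrum is the GIT quotient X//G.\<close>
definition inv_ring :: "'i set \<Rightarrow> ('i \<Rightarrow> complex^'n::finite^'n) set \<Rightarrow> 'g set
    \<Rightarrow> ('g \<Rightarrow> ('i \<Rightarrow> complex^'n^'n) \<Rightarrow> ('i \<Rightarrow> complex^'n^'n))
    \<Rightarrow> (('i \<Rightarrow> complex^'n^'n) \<Rightarrow> complex) set" where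
  "inv_ring I X G act = {f \<in> coord_ring I X. \<forall>g\<in>G. \<forall>x\<in>X. f (act g x) = f x}"

text \<open>Isomorphism of complex algebras of functions on X resp. Y
  (= isomorphism of the corresponding affine varieties).\<close>
definition alg_iso :: "('x \<Rightarrow> complex) set \<Rightarrow> 'x set \<Rightarrow> ('y \<Rightarrow> complex) set \<Rightarrow> 'y set \<Rightarrow> bool" where
  "alg_iso R X S Y \<longleftrightarrow> (\<exists>\<Phi>. bij_betw \<Phi> R S
      \<and> (\<forall>f\<in>R. \<forall>g\<in>R. \<Phi> (\<lambda>x. f x + g x) = (\<lambda>y. \<Phi> f y + \<Phi> g y)
                     \<and> \<Phi> (\<lambda>x. f x * g x) = (\<lambda>y. \<Phi> f y * \<Phi> g y))
      \<and> (\<forall>c. \<Phi> (\<lambda>x. if x \<in> X then c else 0) = (\<lambda>y. if y \<in> Y then c else 0)))"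

definition quiver_connected :: "'v set \<Rightarrow> 'a set \<Rightarrow> ('a \<Rightarrow> 'v) \<Rightarrow> ('a \<Rightarrow> 'v) \<Rightarrow> bool" where
  "quiver_connected V A hh tt \<longleftrightarrow> V \<noteq> {} \<and>
     (let E = {(hh a, tt a) | a. a \<in> A} in V \<times> V \<subseteq> (E \<union> E\<inverse>)\<^sup>*)"

definition betti1 :: "'v set \<Rightarrow> 'a set \<Rightarrow> nat" where
  "betti1 V A = card A + 1 - card V"

definition R_inv :: "'a set \<Rightarrow> ('a \<Rightarrow> complex^'n::finite^'n) set" where
  "R_inv A = {x. (\<forall>a\<in>A. invertible (x a)) \<and> (\<forall>a. a \<notin> A \<longrightarrow> x a = 0)}"

definition G_W :: "'v set \<Rightarrow> ('v \<Rightarrow> complex^'n::finite^'n) set" where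
  "G_W V = {g. \<forall>v\<in>V. invertible (g v)}"

definition quiver_act :: "'a set \<Rightarrow> ('a \<Rightarrow> 'v) \<Rightarrow> ('a \<Rightarrow> 'v) \<Rightarrow> ('v \<Rightarrow> complex^'n::finite^'n)
    \<Rightarrow> ('a \<Rightarrow> complex^'n^'n) \<Rightarrow> ('a \<Rightarrow> complex^'n^'n)" where
  "quiver_act A hh tt g x = (\<lambda>a. if a \<in> A then g (hh a) ** x a ** matrix_inv (g (tt a)) else 0)"

text \<open>Hom(F_r, GL(n)) = GL(n)^r, as r-tuples (indices < r) of invertible matrices.\<close>
definition hom_free :: "nat \<Rightarrow> (nat \<Rightarrow> complex^'n::finite^'n) set" where
  "hom_free r = {y. (\<forall>i<r. invertible (y i)) \<and> (\<forall>i. r \<le> i \<longrightarrow> y i = 0)}"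

definition GLn :: "(complex^'n::finite^'n) set" where
  "GLn = {g. invertible g}"

definition conj_act :: "nat \<Rightarrow> complex^'n::finite^'n \<Rightarrow> (nat \<Rightarrow> complex^'n^'n) \<Rightarrow> (nat \<Rightarrow> complex^'n^'n)" where
  "conj_act r g y = (\<lambda>i. if i < r then g ** y i ** matrix_inv g else 0)"

end

theory Submission
  imports Defs
begin

text \<open>Every arrow e joining two distinct vertices can be contracted: the gauge transformation
  at its head w that sends x(e) to the identity identifies the invariants of Q with those of
  the quiver Q/e in which w is merged into the tail of e; this preserves connectedness and
  |A| - |V|. Contracting all non-loop arrows of a connected quiver leaves a single vertex with
  b_1(Q) loops, where G_W(Q) = GL(W) acts by simultaneous conjugation, which is the character
  variety of the free group.
  Both reductions are instances of one transfer principle: regular maps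
  \<sigma> : Y \<rightarrow> X and \<pi> : X \<rightarrow> Y, compatible with the group actions, with \<pi> \<circ> \<sigma> = id and
  \<sigma> \<circ> \<pi> moving points only within orbits, induce mutually inverse isomorphisms of the
  invariant rings.\<close>

lemma matrix_inv_right:
  fixes A :: "'a::field^'n^'n"
  assumes "invertible A"
  shows "A ** matrix_inv A = mat 1"
  using someI_ex[of "\<lambda>A'. A ** A' = mat 1 \<and> A' ** A = mat 1"] assms
  unfolding invertible_def matrix_inv_def by blast

lemma matrix_inv_left:
  fixes A :: "'a::field^'n^'n"
  assumes "invertible A"
  shows "matrix_inv A ** A = mat 1"
  using someI_ex[of "\<lambda>A'. A ** A' = mat 1 \<and> A' ** A = mat 1"] assms
  unfolding invertible_def matrix_inv_def by blast

lemma matrix_inv_unique: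
  fixes A :: "'a::field^'n^'n"
  assumes "A ** B = mat 1"
  shows "matrix_inv A = B"
proof -
  have "invertible A" using assms invertible_right_inverse by blast
  have "matrix_inv A = matrix_inv A ** (A ** B)" by (simp add: assms)
  also have "\<dots> = (matrix_inv A ** A) ** B" by (simp add: matrix_mul_assoc)
  also have "\<dots> = B" using matrix_inv_left[OF \<open>invertible A\<close>] by simp
  finally show ?thesis .
qed

lemma matrix_inv_mat1: "matrix_inv (mat 1 :: 'a::field^'n^'n) = mat 1"
  by (rule matrix_inv_unique) simp

lemma invertible_mat1: "invertible (mat 1 :: 'a::field^'n^'n)"
  unfolding invertible_def by (intro exI[of _ "mat 1"]) simp

lemma invertible_matrix_inv:
  fixes A :: "'a::field^'n^'n"
  assumes "invertible A"
  shows "invertible (matrix_inv A)"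
  using matrix_inv_left[OF assms] matrix_inv_right[OF assms] invertible_def by blast

lemma matrix_inv_matrix_inv:
  fixes A :: "'a::field^'n^'n"
  assumes "invertible A"
  shows "matrix_inv (matrix_inv A) = A"
  by (rule matrix_inv_unique) (rule matrix_inv_left[OF assms])

lemma matrix_inv_mult:
  fixes A B :: "'a::field^'n^'n"
  assumes "invertible A" "invertible B"
  shows "matrix_inv (A ** B) = matrix_inv B ** matrix_inv A"
proof (rule matrix_inv_unique)
  have "A ** B ** (matrix_inv B ** matrix_inv A) = A ** (B ** matrix_inv B) ** matrix_inv A"
    by (simp add: matrix_mul_assoc)
  also have "\<dots> = mat 1" using matrix_inv_right[OF assms(1)] matrix_inv_right[OF assms(2)] by simp
  finally show "A ** B ** (matrix_inv B ** matrix_inv A) = mat 1" .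
qed

lemma matrix_inv_cramer:
  fixes A :: "'a::field^'n^'n"
  assumes "invertible A"
  shows "matrix_inv A $ k $ j
           = det (\<chi> i l. if l = k then axis j 1 $ i else A $ i $ l) * inverse (det A)"
proof -
  let ?x = "\<chi> k. matrix_inv A $ k $ j"
  have "det A \<noteq> 0" using assms invertible_det_nz by blast
  moreover have "A *v ?x = axis j 1"
  proof -
    have "A *v ?x = (\<chi> i. (A ** matrix_inv A) $ i $ j)"
      by (simp add: matrix_vector_mult_def matrix_matrix_mult_def)
    then show ?thesis
      using matrix_inv_right[OF assms] by (simp add: mat_def axis_def vec_eq_iff)
  qed
  ultimately have "?x = (\<chi> k. det (\<chi> i l. if l = k then axis j 1 $ i else A $ i $ l) / det A)"
    using cramer by blast
  then show ?thesis by (simp add: divide_inverse vec_eq_iff)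
qed

definition regular_on :: "'i set \<Rightarrow> ('i \<Rightarrow> complex^'n::finite^'n) set
    \<Rightarrow> (('i \<Rightarrow> complex^'n^'n) \<Rightarrow> complex) \<Rightarrow> bool" where
  "regular_on I X \<phi> \<longleftrightarrow> (\<exists>f\<in>reg_gen I. \<forall>x\<in>X. \<phi> x = f x)"

text \<open>Regular maps into GL(n): the inverse of the determinant must be regular as well,
  so that such maps can be substituted into the generator invdet of reg_gen.\<close>
definition regular_matrix_on :: "'i set \<Rightarrow> ('i \<Rightarrow> complex^'n::finite^'n) set
    \<Rightarrow> (('i \<Rightarrow> complex^'n^'n) \<Rightarrow> complex^'n^'n) \<Rightarrow> bool" where
  "regular_matrix_on I X F \<longleftrightarrow>
     (\<forall>j k. regular_on I X (\<lambda>x. F x $ j $ k)) \<and> regular_on I X (\<lambda>x. inverse (det (F x)))"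

lemma regular_on_gen: "f \<in> reg_gen I \<Longrightarrow> regular_on I X f"
  unfolding regular_on_def by blast

lemma regular_on_const: "regular_on I X (\<lambda>x. c)"
  by (rule regular_on_gen) (rule reg_gen.const)

lemma regular_on_add:
  assumes "regular_on I X f" "regular_on I X g"
  shows "regular_on I X (\<lambda>x. f x + g x)"
proof -
  obtain f' g' where "f' \<in> reg_gen I" "\<forall>x\<in>X. f x = f' x" "g' \<in> reg_gen I" "\<forall>x\<in>X. g x = g' x"
    using assms unfolding regular_on_def by blast
  then show ?thesis
    unfolding regular_on_def by (intro bexI[of _ "\<lambda>x. f' x + g' x"] reg_gen.add) auto
qed

lemma regular_on_mult:
  assumes "regular_on I X f" "regular_on I X g"
  shows "regular_on I X (\<lambda>x. f x * g x)"
proof -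
  obtain f' g' where "f' \<in> reg_gen I" "\<forall>x\<in>X. f x = f' x" "g' \<in> reg_gen I" "\<forall>x\<in>X. g x = g' x"
    using assms unfolding regular_on_def by blast
  then show ?thesis
    unfolding regular_on_def by (intro bexI[of _ "\<lambda>x. f' x * g' x"] reg_gen.mult) auto
qed

lemma regular_on_cong:
  "regular_on I X f \<Longrightarrow> (\<And>x. x \<in> X \<Longrightarrow> f x = g x) \<Longrightarrow> regular_on I X g"
  unfolding regular_on_def by auto

lemma regular_on_sum:
  "finite S \<Longrightarrow> (\<And>s. s \<in> S \<Longrightarrow> regular_on I X (f s)) \<Longrightarrow> regular_on I X (\<lambda>x. \<Sum>s\<in>S. f s x)"
  by (induction S rule: finite_induct) (simp_all add: regular_on_const regular_on_add)

lemma regular_on_prod: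
  "finite S \<Longrightarrow> (\<And>s. s \<in> S \<Longrightarrow> regular_on I X (f s)) \<Longrightarrow> regular_on I X (\<lambda>x. \<Prod>s\<in>S. f s x)"
  by (induction S rule: finite_induct) (simp_all add: regular_on_const regular_on_mult)

lemma regular_on_det:
  fixes F :: "('i \<Rightarrow> complex^'n::finite^'n) \<Rightarrow> complex^'m::finite^'m"
  assumes "\<And>j k. regular_on I X (\<lambda>x. F x $ j $ k)"
  shows "regular_on I X (\<lambda>x. det (F x))"
  unfolding det_def
  by (intro regular_on_sum regular_on_mult regular_on_const regular_on_prod finite assms)

lemma regular_matrix_on_coord: "i \<in> I \<Longrightarrow> regular_matrix_on I X (\<lambda>x. x i)"
  unfolding regular_matrix_on_def by (simp add: regular_on_gen reg_gen.coord reg_gen.invdet)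

lemma regular_matrix_on_const: "regular_matrix_on I X (\<lambda>x. C)"
  unfolding regular_matrix_on_def by (simp add: regular_on_const)

lemma regular_matrix_on_mult:
  assumes "regular_matrix_on I X F" "regular_matrix_on I X G"
  shows "regular_matrix_on I X (\<lambda>x. F x ** G x)"
  using assms unfolding regular_matrix_on_def matrix_matrix_mult_def
  by (simp add: det_mul[unfolded matrix_matrix_mult_def] regular_on_sum regular_on_mult)

lemma regular_matrix_on_inv:
  assumes F: "regular_matrix_on I X F" and inv: "\<And>x. x \<in> X \<Longrightarrow> invertible (F x)"
  shows "regular_matrix_on I X (\<lambda>x. matrix_inv (F x))"
proof -
  have entries: "\<And>j k. regular_on I X (\<lambda>x. F x $ j $ k)"
    and inv_det: "regular_on I X (\<lambda>x. inverse (det (F x)))"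
    using F unfolding regular_matrix_on_def by auto
  have "regular_on I X (\<lambda>x. matrix_inv (F x) $ k $ j)" for k j
  proof (rule regular_on_cong)
    show "regular_on I X
            (\<lambda>x. det (\<chi> i l. if l = k then axis j 1 $ i else F x $ i $ l) * inverse (det (F x)))"
    proof (intro regular_on_mult inv_det regular_on_det)
      fix ja ka
      show "regular_on I X (\<lambda>x. (\<chi> i l. if l = k then axis j 1 $ i else F x $ i $ l) $ ja $ ka)"
        by (cases "ka = k") (simp_all add: entries regular_on_const)
    qed
  qed (simp add: matrix_inv_cramer inv)
  moreover have "regular_on I X (\<lambda>x. inverse (det (matrix_inv (F x))))"
  proof (rule regular_on_cong)
    show "regular_on I X (\<lambda>x. det (F x))" by (rule regular_on_det) (rule entries)
    fix x assume "x \<in> X"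
    then have "det (F x) * det (matrix_inv (F x)) = 1"
      using matrix_inv_right[OF inv] by (metis det_I det_mul)
    then show "det (F x) = inverse (det (matrix_inv (F x)))"
      by (metis inverse_unique mult.commute)
  qed
  ultimately show ?thesis unfolding regular_matrix_on_def by blast
qed

lemma regular_on_subst:
  assumes "f \<in> reg_gen I" "\<And>i. i \<in> I \<Longrightarrow> regular_matrix_on J Y (\<lambda>y. F y i)"
  shows "regular_on J Y (\<lambda>y. f (F y))"
  using assms(1)
proof (induction rule: reg_gen.induct)
  case (coord i j k)
  then show ?case using assms(2) unfolding regular_matrix_on_def by simp
next
  case (invdet i)
  then show ?case using assms(2) unfolding regular_matrix_on_def by simp
qed (simp_all add: regular_on_const regular_on_add regular_on_mult)

lemma alg_iso_trans:
  assumes "alg_iso R X S Y" "alg_iso S Y T Z"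
  shows "alg_iso R X T Z"
proof -
  obtain \<Phi> where \<Phi>: "bij_betw \<Phi> R S"
      "\<forall>f\<in>R. \<forall>g\<in>R. \<Phi> (\<lambda>x. f x + g x) = (\<lambda>y. \<Phi> f y + \<Phi> g y)
                   \<and> \<Phi> (\<lambda>x. f x * g x) = (\<lambda>y. \<Phi> f y * \<Phi> g y)"
      "\<forall>c. \<Phi> (\<lambda>x. if x \<in> X then c else 0) = (\<lambda>y. if y \<in> Y then c else 0)"
    using assms(1) unfolding alg_iso_def by blast
  obtain \<Psi> where \<Psi>: "bij_betw \<Psi> S T"
      "\<forall>f\<in>S. \<forall>g\<in>S. \<Psi> (\<lambda>x. f x + g x) = (\<lambda>y. \<Psi> f y + \<Psi> g y)
                   \<and> \<Psi> (\<lambda>x. f x * g x) = (\<lambda>y. \<Psi> f y * \<Psi> g y)"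
      "\<forall>c. \<Psi> (\<lambda>x. if x \<in> Y then c else 0) = (\<lambda>y. if y \<in> Z then c else 0)"
    using assms(2) unfolding alg_iso_def by blast
  have "\<And>f. f \<in> R \<Longrightarrow> \<Phi> f \<in> S" using \<Phi>(1) bij_betwE by blast
  then have "\<forall>f\<in>R. \<forall>g\<in>R. (\<Psi> \<circ> \<Phi>) (\<lambda>x. f x + g x) = (\<lambda>y. (\<Psi> \<circ> \<Phi>) f y + (\<Psi> \<circ> \<Phi>) g y)
                 \<and> (\<Psi> \<circ> \<Phi>) (\<lambda>x. f x * g x) = (\<lambda>y. (\<Psi> \<circ> \<Phi>) f y * (\<Psi> \<circ> \<Phi>) g y)"
    using \<Phi>(2) \<Psi>(2) by simp
  moreover have "\<forall>c. (\<Psi> \<circ> \<Phi>) (\<lambda>x. if x \<in> X then c else 0) = (\<lambda>y. if y \<in> Z then c else 0)"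
    using \<Phi>(3) \<Psi>(3) by simp
  ultimately show ?thesis
    unfolding alg_iso_def using bij_betw_trans[OF \<Phi>(1) \<Psi>(1)] by blast
qed

definition pullback :: "'y set \<Rightarrow> ('y \<Rightarrow> 'x) \<Rightarrow> ('x \<Rightarrow> complex) \<Rightarrow> 'y \<Rightarrow> complex" where
  "pullback Y \<sigma> F = (\<lambda>y. if y \<in> Y then F (\<sigma> y) else 0)"

lemma inv_ring_outside: "F \<in> inv_ring I X G act \<Longrightarrow> x \<notin> X \<Longrightarrow> F x = 0"
  unfolding inv_ring_def coord_ring_def by auto

lemma inv_ring_invariant: "F \<in> inv_ring I X G act \<Longrightarrow> g \<in> G \<Longrightarrow> x \<in> X \<Longrightarrow> F (act g x) = F x"
  unfolding inv_ring_def by auto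

lemma pullback_inv_ring:
  fixes X :: "('i \<Rightarrow> complex^'n::finite^'n) set" and Y :: "('j \<Rightarrow> complex^'n^'n) set"
  assumes maps: "\<And>y. y \<in> Y \<Longrightarrow> \<sigma> y \<in> X"
    and regular: "\<And>f. f \<in> reg_gen I \<Longrightarrow> regular_on J Y (\<lambda>y. f (\<sigma> y))"
    and act_closed: "\<And>h y. h \<in> H \<Longrightarrow> y \<in> Y \<Longrightarrow> aY h y \<in> Y"
    and equivariant: "\<And>h y. h \<in> H \<Longrightarrow> y \<in> Y \<Longrightarrow> \<exists>g\<in>G. \<sigma> (aY h y) = aX g (\<sigma> y)"
    and F: "F \<in> inv_ring I X G aX"
  shows "pullback Y \<sigma> F \<in> inv_ring J Y H aY"
proof -
  obtain p where p: "p \<in> reg_gen I" "F = (\<lambda>x. if x \<in> X then p x else 0)"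
    using F unfolding inv_ring_def coord_ring_def by auto
  obtain q where q: "q \<in> reg_gen J" "\<forall>y\<in>Y. p (\<sigma> y) = q y"
    using regular[OF p(1)] unfolding regular_on_def by blast
  have "pullback Y \<sigma> F = (\<lambda>y. if y \<in> Y then q y else 0)"
    unfolding pullback_def p(2) using q(2) maps by (auto simp: fun_eq_iff)
  then have "pullback Y \<sigma> F \<in> coord_ring J Y" unfolding coord_ring_def using q(1) by blast
  moreover have "pullback Y \<sigma> F (aY h y) = pullback Y \<sigma> F y" if hy: "h \<in> H" "y \<in> Y" for h y
  proof -
    obtain g where "g \<in> G" "\<sigma> (aY h y) = aX g (\<sigma> y)" using equivariant[OF hy] by blast
    then show ?thesis
      unfolding pullback_def using hy act_closed inv_ring_invariant[OF F] maps by simp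
  qed
  ultimately show ?thesis unfolding inv_ring_def by blast
qed

lemma alg_iso_inv_ring_transfer:
  fixes X :: "('i \<Rightarrow> complex^'n::finite^'n) set" and Y :: "('j \<Rightarrow> complex^'n^'n) set"
  assumes \<sigma>_maps: "\<And>y. y \<in> Y \<Longrightarrow> \<sigma> y \<in> X"
    and \<pi>_maps: "\<And>x. x \<in> X \<Longrightarrow> \<pi> x \<in> Y"
    and X_act_closed: "\<And>g x. g \<in> G \<Longrightarrow> x \<in> X \<Longrightarrow> aX g x \<in> X"
    and Y_act_closed: "\<And>h y. h \<in> H \<Longrightarrow> y \<in> Y \<Longrightarrow> aY h y \<in> Y"
    and \<sigma>_regular: "\<And>f. f \<in> reg_gen I \<Longrightarrow> regular_on J Y (\<lambda>y. f (\<sigma> y))"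
    and \<pi>_regular: "\<And>f. f \<in> reg_gen J \<Longrightarrow> regular_on I X (\<lambda>x. f (\<pi> x))"
    and \<sigma>_equivariant: "\<And>h y. h \<in> H \<Longrightarrow> y \<in> Y \<Longrightarrow> \<exists>g\<in>G. \<sigma> (aY h y) = aX g (\<sigma> y)"
    and \<pi>_equivariant: "\<And>g x. g \<in> G \<Longrightarrow> x \<in> X \<Longrightarrow> \<exists>h\<in>H. \<pi> (aX g x) = aY h (\<pi> x)"
    and \<pi>_\<sigma>: "\<And>y. y \<in> Y \<Longrightarrow> \<pi> (\<sigma> y) = y"
    and \<sigma>_\<pi>: "\<And>x. x \<in> X \<Longrightarrow> \<exists>g\<in>G. \<sigma> (\<pi> x) = aX g x"
  shows "alg_iso (inv_ring I X G aX) X (inv_ring J Y H aY) Y"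
proof -
  let ?R = "inv_ring I X G aX" and ?S = "inv_ring J Y H aY"
  have "bij_betw (pullback Y \<sigma>) ?R ?S"
  proof (rule bij_betwI[where g = "pullback X \<pi>"])
    show "pullback Y \<sigma> \<in> ?R \<rightarrow> ?S"
      by (intro Pi_I pullback_inv_ring[where X = X])
         (simp_all add: \<sigma>_maps \<sigma>_regular Y_act_closed \<sigma>_equivariant)
    show "pullback X \<pi> \<in> ?S \<rightarrow> ?R"
      by (intro Pi_I pullback_inv_ring[where X = Y])
         (simp_all add: \<pi>_maps \<pi>_regular X_act_closed \<pi>_equivariant)
    show "pullback X \<pi> (pullback Y \<sigma> F) = F" if F: "F \<in> ?R" for F
    proof
      fix x show "pullback X \<pi> (pullback Y \<sigma> F) x = F x"
      proof (cases "x \<in> X")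
        case True
        then obtain g where "g \<in> G" "\<sigma> (\<pi> x) = aX g x" using \<sigma>_\<pi> by blast
        then show ?thesis
          unfolding pullback_def using True \<pi>_maps inv_ring_invariant[OF F] by simp
      qed (simp add: pullback_def inv_ring_outside[OF F])
    qed
    show "pullback Y \<sigma> (pullback X \<pi> F) = F" if F: "F \<in> ?S" for F
      unfolding pullback_def using \<sigma>_maps inv_ring_outside[OF F] by (auto simp: fun_eq_iff \<pi>_\<sigma>)
  qed
  moreover have "\<forall>f\<in>?R. \<forall>g\<in>?R.
      pullback Y \<sigma> (\<lambda>x. f x + g x) = (\<lambda>y. pullback Y \<sigma> f y + pullback Y \<sigma> g y)
    \<and> pullback Y \<sigma> (\<lambda>x. f x * g x) = (\<lambda>y. pullback Y \<sigma> f y * pullback Y \<sigma> g y)"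
    unfolding pullback_def by (simp add: fun_eq_iff)
  moreover have "\<forall>c. pullback Y \<sigma> (\<lambda>x. if x \<in> X then c else 0) = (\<lambda>y. if y \<in> Y then c else 0)"
    unfolding pullback_def using \<sigma>_maps by (simp add: fun_eq_iff)
  ultimately show ?thesis unfolding alg_iso_def by blast
qed

abbreviation quiver_invariants :: "'v set \<Rightarrow> 'a set \<Rightarrow> ('a \<Rightarrow> 'v) \<Rightarrow> ('a \<Rightarrow> 'v)
    \<Rightarrow> (('a \<Rightarrow> complex^'n::finite^'n) \<Rightarrow> complex) set" where
  "quiver_invariants V A hh tt \<equiv> inv_ring A (R_inv A) (G_W V) (quiver_act A hh tt)"

abbreviation character_invariants :: "nat \<Rightarrow> ((nat \<Rightarrow> complex^'n::finite^'n) \<Rightarrow> complex) set" where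
  "character_invariants r \<equiv> inv_ring {..<r} (hom_free r) GLn (conj_act r)"

lemma quiver_act_in_R_inv:
  fixes x :: "'a \<Rightarrow> complex^'n::finite^'n"
  assumes "g \<in> G_W V" "\<forall>a\<in>A. hh a \<in> V \<and> tt a \<in> V" "\<forall>a\<in>A. invertible (x a)"
  shows "quiver_act A hh tt g x \<in> R_inv A"
  using assms unfolding R_inv_def G_W_def quiver_act_def
  by (auto intro!: invertible_mult invertible_matrix_inv)

definition collapse :: "'v \<Rightarrow> 'v \<Rightarrow> 'v \<Rightarrow> 'v" where
  "collapse w u v = (if v = w then u else v)"

lemma collapse_ends:
  assumes "\<forall>a\<in>A. hh a \<in> V \<and> tt a \<in> V" "u \<in> V" "u \<noteq> w"
  shows "\<forall>a\<in>A. (collapse w u \<circ> hh) a \<in> V - {w} \<and> (collapse w u \<circ> tt) a \<in> V - {w}"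
  using assms unfolding collapse_def by auto

definition gauge_fix :: "'a \<Rightarrow> 'v \<Rightarrow> ('a \<Rightarrow> complex^'n::finite^'n) \<Rightarrow> 'v \<Rightarrow> complex^'n^'n" where
  "gauge_fix e w x v = (if v = w then matrix_inv (x e) else mat 1)"

lemma invertible_gauge_fix: "invertible (x e) \<Longrightarrow> invertible (gauge_fix e w x v)"
  unfolding gauge_fix_def by (simp add: invertible_matrix_inv invertible_mat1)

lemma gauge_fix_in_G_W: "x \<in> R_inv A \<Longrightarrow> e \<in> A \<Longrightarrow> gauge_fix e w x \<in> G_W V"
  unfolding G_W_def R_inv_def by (blast intro: invertible_gauge_fix)

lemma regular_matrix_on_gauge_fix:
  assumes "e \<in> A"
  shows "regular_matrix_on A (R_inv A) (\<lambda>x. gauge_fix e w x v)"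
proof -
  have "regular_matrix_on A (R_inv A) (\<lambda>x. matrix_inv (x e))"
    by (rule regular_matrix_on_inv) (use assms in \<open>auto intro: regular_matrix_on_coord simp: R_inv_def\<close>)
  then show ?thesis
    unfolding gauge_fix_def by (cases "v = w") (simp_all add: regular_matrix_on_const)
qed

lemma gauge_fix_quiver_act:
  fixes x :: "'a \<Rightarrow> complex^'n::finite^'n"
  assumes e: "e \<in> A" and inv: "invertible (x e)" "invertible (g (hh e))" "invertible (g (tt e))"
  shows "gauge_fix e (hh e) (quiver_act A hh tt g x) v ** g v
           = g (collapse (hh e) (tt e) v) ** gauge_fix e (hh e) x v"
proof (cases "v = hh e")
  case True
  have "matrix_inv (g (hh e) ** x e ** matrix_inv (g (tt e)))
          = g (tt e) ** (matrix_inv (x e) ** matrix_inv (g (hh e)))"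
    using inv by (simp add: matrix_inv_mult invertible_mult invertible_matrix_inv matrix_inv_matrix_inv)
  then have "matrix_inv (g (hh e) ** x e ** matrix_inv (g (tt e))) ** g (hh e)
               = g (tt e) ** matrix_inv (x e)"
    using matrix_inv_left[OF inv(2)] by (metis matrix_mul_assoc matrix_mul_rid)
  then show ?thesis
    using True e unfolding gauge_fix_def collapse_def quiver_act_def by simp
qed (simp add: gauge_fix_def collapse_def)

lemma quiver_act_gauge_fix:
  fixes x :: "'a \<Rightarrow> complex^'n::finite^'n"
  assumes e: "e \<in> A" and ends: "\<forall>a\<in>A. hh a \<in> V \<and> tt a \<in> V"
    and g: "g \<in> G_W V" and x: "x \<in> R_inv A"
  defines "\<phi> \<equiv> collapse (hh e) (tt e)"
  shows "quiver_act (A - {e}) hh tt (gauge_fix e (hh e) (quiver_act A hh tt g x)) (quiver_act A hh tt g x)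
           = quiver_act (A - {e}) (\<phi> \<circ> hh) (\<phi> \<circ> tt) g
               (quiver_act (A - {e}) hh tt (gauge_fix e (hh e) x) x)"
proof
  fix a
  let ?k = "gauge_fix e (hh e) x" and ?k' = "gauge_fix e (hh e) (quiver_act A hh tt g x)"
  have g_inv: "invertible (g v)" if "v \<in> V" for v using g that unfolding G_W_def by blast
  have x_inv: "invertible (x c)" if "c \<in> A" for c using x that unfolding R_inv_def by blast
  have "quiver_act A hh tt g x \<in> R_inv A" using x_inv by (intro quiver_act_in_R_inv[OF g ends]) simp
  then have k'_inv: "invertible (?k' v)" for v
    using e unfolding R_inv_def by (blast intro: invertible_gauge_fix)
  have k_inv: "invertible (?k v)" for v using x_inv[OF e] by (rule invertible_gauge_fix)
  have \<phi>V: "\<phi> v \<in> V" if "v \<in> V" for v using that e ends unfolding \<phi>_def collapse_def by auto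
  have shift: "?k' v ** g v = g (\<phi> v) ** ?k v" for v
    unfolding \<phi>_def using e ends by (intro gauge_fix_quiver_act x_inv g_inv) auto
  show "quiver_act (A - {e}) hh tt ?k' (quiver_act A hh tt g x) a
          = quiver_act (A - {e}) (\<phi> \<circ> hh) (\<phi> \<circ> tt) g (quiver_act (A - {e}) hh tt ?k x) a"
  proof (cases "a \<in> A - {e}")
    case True
    then have a: "a \<in> A" "hh a \<in> V" "tt a \<in> V" using ends by auto
    have "quiver_act (A - {e}) hh tt ?k' (quiver_act A hh tt g x) a
            = (?k' (hh a) ** g (hh a)) ** x a ** matrix_inv (?k' (tt a) ** g (tt a))"
      using True a k'_inv g_inv
      by (simp add: quiver_act_def matrix_inv_mult matrix_mul_assoc)
    also have "\<dots> = (g (\<phi> (hh a)) ** ?k (hh a)) ** x a ** matrix_inv (g (\<phi> (tt a)) ** ?k (tt a))"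
      by (simp only: shift)
    also have "\<dots> = quiver_act (A - {e}) (\<phi> \<circ> hh) (\<phi> \<circ> tt) g (quiver_act (A - {e}) hh tt ?k x) a"
      using True a k_inv g_inv \<phi>V
      by (simp add: quiver_act_def matrix_inv_mult matrix_mul_assoc)
    finally show ?thesis .
  next
    case False
    then show ?thesis unfolding quiver_act_def by (simp only: if_not_P if_False)
  qed
qed

lemma alg_iso_contract_arrow:
  fixes A :: "'a set" and hh tt :: "'a \<Rightarrow> 'v"
  assumes e: "e \<in> A" and nonloop: "tt e \<noteq> hh e" and ends: "\<forall>a\<in>A. hh a \<in> V \<and> tt a \<in> V"
  defines "\<phi> \<equiv> collapse (hh e) (tt e)"
  shows "alg_iso (quiver_invariants V A hh tt) (R_inv A :: ('a \<Rightarrow> complex^'n::finite^'n) set)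
           (quiver_invariants (V - {hh e}) (A - {e}) (\<phi> \<circ> hh) (\<phi> \<circ> tt))
           (R_inv (A - {e}) :: ('a \<Rightarrow> complex^'n^'n) set)"
proof -
  let ?X = "R_inv A :: ('a \<Rightarrow> complex^'n^'n) set" and ?Y = "R_inv (A - {e}) :: ('a \<Rightarrow> complex^'n^'n) set"
  define \<sigma> where "\<sigma> y = y(e := mat 1)" for y :: "'a \<Rightarrow> complex^'n^'n"
  define \<pi> where "\<pi> x = quiver_act (A - {e}) hh tt (gauge_fix e (hh e) x) x"
    for x :: "'a \<Rightarrow> complex^'n^'n"
  have X_inv: "invertible (x a)" if "x \<in> ?X" "a \<in> A" for x a using that unfolding R_inv_def by blast
  have ends': "\<forall>a\<in>A. (\<phi> \<circ> hh) a \<in> V - {hh e} \<and> (\<phi> \<circ> tt) a \<in> V - {hh e}"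
    unfolding \<phi>_def using ends e nonloop by (intro collapse_ends) auto
  show ?thesis
  proof (rule alg_iso_inv_ring_transfer[where \<sigma> = \<sigma> and \<pi> = \<pi>])
    show "\<sigma> y \<in> ?X" if "y \<in> ?Y" for y
      using that e unfolding R_inv_def \<sigma>_def by (auto simp: invertible_mat1)
    show "\<pi> x \<in> ?Y" if "x \<in> ?X" for x
      unfolding \<pi>_def using that X_inv e by (intro quiver_act_in_R_inv gauge_fix_in_G_W) auto
    show "quiver_act A hh tt g x \<in> ?X" if "g \<in> G_W V" "x \<in> ?X" for g x
      using that ends X_inv by (intro quiver_act_in_R_inv) auto
    show "quiver_act (A - {e}) (\<phi> \<circ> hh) (\<phi> \<circ> tt) g y \<in> ?Y" if "g \<in> G_W (V - {hh e})" "y \<in> ?Y" for g y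
      using that ends' by (intro quiver_act_in_R_inv) (auto simp: R_inv_def)
    show "regular_on (A - {e}) ?Y (\<lambda>y. f (\<sigma> y))" if "f \<in> reg_gen A" for f
      using that
    proof (rule regular_on_subst)
      show "regular_matrix_on (A - {e}) ?Y (\<lambda>y. \<sigma> y i)" if "i \<in> A" for i
        using that unfolding \<sigma>_def
        by (cases "i = e") (simp_all add: regular_matrix_on_const regular_matrix_on_coord)
    qed
    show "regular_on A ?X (\<lambda>x. f (\<pi> x))" if "f \<in> reg_gen (A - {e})" for f
      using that
    proof (rule regular_on_subst)
      show "regular_matrix_on A ?X (\<lambda>x. \<pi> x i)" if "i \<in> A - {e}" for i
        unfolding \<pi>_def quiver_act_def using that X_inv[OF _ e]
        by (simp add: regular_matrix_on_mult regular_matrix_on_inv regular_matrix_on_coord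
            regular_matrix_on_gauge_fix[OF e] invertible_gauge_fix)
    qed
    show "\<exists>g\<in>G_W V. \<sigma> (quiver_act (A - {e}) (\<phi> \<circ> hh) (\<phi> \<circ> tt) h y) = quiver_act A hh tt g (\<sigma> y)"
      if h: "h \<in> G_W (V - {hh e})" for h y
    proof
      show "h \<circ> \<phi> \<in> G_W V" using h ends e nonloop unfolding G_W_def \<phi>_def collapse_def by auto
      have "invertible (h (tt e))" using h ends e nonloop unfolding G_W_def by auto
      then show "\<sigma> (quiver_act (A - {e}) (\<phi> \<circ> hh) (\<phi> \<circ> tt) h y) = quiver_act A hh tt (h \<circ> \<phi>) (\<sigma> y)"
        using e nonloop matrix_inv_right[of "h (tt e)"]
        by (auto simp: \<sigma>_def quiver_act_def \<phi>_def collapse_def fun_eq_iff)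
    qed
    show "\<exists>h\<in>G_W (V - {hh e}). \<pi> (quiver_act A hh tt g x) = quiver_act (A - {e}) (\<phi> \<circ> hh) (\<phi> \<circ> tt) h (\<pi> x)"
      if "g \<in> G_W V" "x \<in> ?X" for g x
    proof
      show "g \<in> G_W (V - {hh e})" using that unfolding G_W_def by auto
      show "\<pi> (quiver_act A hh tt g x) = quiver_act (A - {e}) (\<phi> \<circ> hh) (\<phi> \<circ> tt) g (\<pi> x)"
        unfolding \<pi>_def \<phi>_def using e ends that by (rule quiver_act_gauge_fix)
    qed
    show "\<pi> (\<sigma> y) = y" if "y \<in> ?Y" for y
      using that unfolding \<pi>_def \<sigma>_def quiver_act_def gauge_fix_def R_inv_def
      by (auto simp: matrix_inv_mat1 fun_eq_iff)
    show "\<exists>g\<in>G_W V. \<sigma> (\<pi> x) = quiver_act A hh tt g x" if x: "x \<in> ?X" for x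
    proof
      show "gauge_fix e (hh e) x \<in> G_W V" using x e by (rule gauge_fix_in_G_W)
      show "\<sigma> (\<pi> x) = quiver_act A hh tt (gauge_fix e (hh e) x) x"
        using e nonloop matrix_inv_left[OF X_inv[OF x e]]
        by (auto simp: \<sigma>_def \<pi>_def quiver_act_def gauge_fix_def matrix_inv_mat1 fun_eq_iff)
    qed
  qed
qed

lemma alg_iso_bouquet:
  fixes A :: "'a set" and hh tt :: "'a \<Rightarrow> 'v"
  assumes A: "finite A" and v: "v \<in> V" and loops: "\<forall>a\<in>A. hh a = v \<and> tt a = v"
  shows "alg_iso (quiver_invariants V A hh tt) (R_inv A :: ('a \<Rightarrow> complex^'n::finite^'n) set)
           (character_invariants (card A)) (hom_free (card A) :: (nat \<Rightarrow> complex^'n^'n) set)"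
proof -
  let ?r = "card A"
  let ?X = "R_inv A :: ('a \<Rightarrow> complex^'n^'n) set" and ?Y = "hom_free ?r :: (nat \<Rightarrow> complex^'n^'n) set"
  obtain b where b: "bij_betw b {..<?r} A"
    using ex_bij_betw_nat_finite[OF A] by (auto simp: atLeast0LessThan)
  define b' where "b' = inv_into {..<?r} b"
  have b'_less: "b' a < ?r" if "a \<in> A" for a
    using bij_betw_apply[OF bij_betw_inv_into[OF b] that] by (simp add: b'_def)
  have b_b': "b (b' a) = a" if "a \<in> A" for a
    unfolding b'_def using b that by (rule bij_betw_inv_into_right)
  have b'_b: "b' (b i) = i" and b_A: "b i \<in> A" if "i < ?r" for i
    unfolding b'_def using b that by (auto simp: bij_betw_inv_into_left intro: bij_betw_apply)
  define \<sigma> where "\<sigma> y = (\<lambda>a. if a \<in> A then y (b' a) else 0)" for y :: "nat \<Rightarrow> complex^'n^'n"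
  define \<pi> where "\<pi> x = (\<lambda>i. if i < ?r then x (b i) else 0)" for x :: "'a \<Rightarrow> complex^'n^'n"
  have X_inv: "invertible (x a)" if "x \<in> ?X" "a \<in> A" for x a using that unfolding R_inv_def by blast
  have Y_inv: "invertible (y i)" if "y \<in> ?Y" "i < ?r" for y i using that unfolding hom_free_def by blast
  show ?thesis
  proof (rule alg_iso_inv_ring_transfer[where \<sigma> = \<sigma> and \<pi> = \<pi>])
    show "\<sigma> y \<in> ?X" if "y \<in> ?Y" for y
      using that b'_less unfolding R_inv_def \<sigma>_def by (auto intro: Y_inv)
    show "\<pi> x \<in> ?Y" if "x \<in> ?X" for x
      using that b_A unfolding hom_free_def \<pi>_def by (auto intro: X_inv)
    show "quiver_act A hh tt g x \<in> ?X" if "g \<in> G_W V" "x \<in> ?X" for g x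
      using that loops v X_inv by (intro quiver_act_in_R_inv) auto
    show "conj_act ?r g y \<in> ?Y" if g: "g \<in> GLn" and y: "y \<in> ?Y" for g y
    proof -
      have "invertible (g ** y i ** matrix_inv g)" if "i < ?r" for i
        using g Y_inv[OF y that] unfolding GLn_def by (intro invertible_mult invertible_matrix_inv) auto
      then show ?thesis unfolding hom_free_def conj_act_def by simp
    qed
    show "regular_on {..<?r} ?Y (\<lambda>y. f (\<sigma> y))" if "f \<in> reg_gen A" for f
      using that
    proof (rule regular_on_subst)
      show "regular_matrix_on {..<?r} ?Y (\<lambda>y. \<sigma> y a)" if "a \<in> A" for a
        unfolding \<sigma>_def using that b'_less by (simp add: regular_matrix_on_coord)
    qed
    show "regular_on A ?X (\<lambda>x. f (\<pi> x))" if "f \<in> reg_gen {..<?r}" for f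
      using that
    proof (rule regular_on_subst)
      show "regular_matrix_on A ?X (\<lambda>x. \<pi> x i)" if "i \<in> {..<?r}" for i
        unfolding \<pi>_def using that b_A by (simp add: regular_matrix_on_coord)
    qed
    show "\<exists>g\<in>G_W V. \<sigma> (conj_act ?r h y) = quiver_act A hh tt g (\<sigma> y)" if "h \<in> GLn" for h y
    proof
      show "(\<lambda>_. h) \<in> G_W V" using that unfolding GLn_def G_W_def by auto
      show "\<sigma> (conj_act ?r h y) = quiver_act A hh tt (\<lambda>_. h) (\<sigma> y)"
        unfolding \<sigma>_def conj_act_def quiver_act_def using b'_less by (auto simp: fun_eq_iff)
    qed
    show "\<exists>h\<in>GLn. \<pi> (quiver_act A hh tt g x) = conj_act ?r h (\<pi> x)" if "g \<in> G_W V" for g x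
    proof
      show "g v \<in> GLn" using that v unfolding GLn_def G_W_def by auto
      show "\<pi> (quiver_act A hh tt g x) = conj_act ?r (g v) (\<pi> x)"
        unfolding \<pi>_def conj_act_def quiver_act_def using b_A loops by (auto simp: fun_eq_iff)
    qed
    show "\<pi> (\<sigma> y) = y" if "y \<in> ?Y" for y
    proof
      fix i
      show "\<pi> (\<sigma> y) i = y i"
        using that b_A b'_b unfolding \<pi>_def \<sigma>_def hom_free_def by auto
    qed
    show "\<exists>g\<in>G_W V. \<sigma> (\<pi> x) = quiver_act A hh tt g x" if "x \<in> ?X" for x
    proof
      show "(\<lambda>_. mat 1) \<in> G_W V" unfolding G_W_def by (simp add: invertible_mat1)
      show "\<sigma> (\<pi> x) = quiver_act A hh tt (\<lambda>_. mat 1) x"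
        unfolding \<pi>_def \<sigma>_def quiver_act_def using b'_less b_b'
        by (auto simp: fun_eq_iff matrix_inv_mat1)
    qed
  qed
qed

lemma rtrancl_map:
  assumes "(x, y) \<in> R\<^sup>*" "\<And>a b. (a, b) \<in> R \<Longrightarrow> (f a, f b) \<in> S\<^sup>*"
  shows "(f x, f y) \<in> S\<^sup>*"
  using assms(1)
proof (induction rule: rtrancl_induct)
  case (step y z)
  then show ?case using assms(2) by (meson rtrancl_trans)
qed simp

lemma quiver_connected_loops:
  assumes "quiver_connected V A hh tt" "\<forall>a\<in>A. tt a = hh a"
  obtains v where "V = {v}"
proof -
  let ?E = "{(hh a, tt a) | a. a \<in> A}"
  obtain v where v: "v \<in> V" using assms(1) unfolding quiver_connected_def by blast
  have "(?E \<union> ?E\<inverse>)\<^sup>* \<subseteq> Id\<^sup>*" using assms(2) by (intro rtrancl_mono) auto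
  then have "V \<times> V \<subseteq> Id" using assms(1) unfolding quiver_connected_def Let_def by auto
  then show ?thesis using v that by blast
qed

lemma quiver_connected_collapse:
  assumes conn: "quiver_connected V A hh tt" and e: "e \<in> A"
    and ends: "\<forall>a\<in>A. hh a \<in> V \<and> tt a \<in> V" and nonloop: "tt e \<noteq> hh e"
  defines "\<phi> \<equiv> collapse (hh e) (tt e)"
  shows "quiver_connected (V - {hh e}) (A - {e}) (\<phi> \<circ> hh) (\<phi> \<circ> tt)"
  unfolding quiver_connected_def Let_def
proof (intro conjI subsetI)
  let ?E = "{(hh a, tt a) | a. a \<in> A}" and ?E' = "{((\<phi> \<circ> hh) a, (\<phi> \<circ> tt) a) | a. a \<in> A - {e}}"
  show "V - {hh e} \<noteq> {}" using e ends nonloop by blast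
  fix p assume "p \<in> (V - {hh e}) \<times> (V - {hh e})"
  then obtain x y where p: "p = (x, y)" "x \<in> V - {hh e}" "y \<in> V - {hh e}" by blast
  have "(x, y) \<in> (?E \<union> ?E\<inverse>)\<^sup>*" using conn p unfolding quiver_connected_def Let_def by blast
  then have "(\<phi> x, \<phi> y) \<in> (?E' \<union> ?E'\<inverse>)\<^sup>*"
  proof (rule rtrancl_map)
    fix a b assume "(a, b) \<in> ?E \<union> ?E\<inverse>"
    then obtain c where c: "c \<in> A" "(a, b) = (hh c, tt c) \<or> (b, a) = (hh c, tt c)" by blast
    show "(\<phi> a, \<phi> b) \<in> (?E' \<union> ?E'\<inverse>)\<^sup>*"
    proof (cases "c = e")
      case True
      then have "\<phi> a = \<phi> b" using c unfolding \<phi>_def collapse_def by auto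
      then show ?thesis by simp
    next
      case False
      then have "(\<phi> a, \<phi> b) \<in> ?E' \<union> ?E'\<inverse>" using c by auto
      then show ?thesis by blast
    qed
  qed
  then show "p \<in> (?E' \<union> ?E'\<inverse>)\<^sup>*" using p unfolding \<phi>_def collapse_def by auto
qed

lemma betti1_remove:
  assumes "finite V" "finite A" "e \<in> A" "u \<in> V" "w \<in> V" "u \<noteq> w"
  shows "betti1 (V - {w}) (A - {e}) = betti1 V A"
proof -
  have "card A \<ge> 1" using assms(2,3) card_0_eq by fastforce
  moreover have "card V \<ge> 2"
    using card_mono[OF assms(1), of "{u, w}"] assms(4-6) by simp
  ultimately show ?thesis unfolding betti1_def using assms by simp
qed

theorem corollary5p2:
  fixes V :: "'v set" and A :: "'a set" and hh tt :: "'a \<Rightarrow> 'v"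
  assumes "finite V" and "finite A"
    and "\<forall>a\<in>A. hh a \<in> V \<and> tt a \<in> V"
    and "quiver_connected V A hh tt"
  shows "alg_iso
     (inv_ring A (R_inv A :: ('a \<Rightarrow> complex^'n::finite^'n) set) (G_W V) (quiver_act A hh tt))
     (R_inv A :: ('a \<Rightarrow> complex^'n::finite^'n) set)
     (inv_ring {..<betti1 V A} (hom_free (betti1 V A) :: (nat \<Rightarrow> complex^'n^'n) set) GLn
        (conj_act (betti1 V A)))
     (hom_free (betti1 V A) :: (nat \<Rightarrow> complex^'n^'n) set)"
  using assms
proof (induction "card V" arbitrary: V A hh tt rule: less_induct)
  case less
  note V = less.prems(1) and A = less.prems(2) and ends = less.prems(3) and conn = less.prems(4)
  show ?case
  proof (cases "\<forall>a\<in>A. tt a = hh a")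
    case True
    then obtain v where "V = {v}" using conn quiver_connected_loops by blast
    then show ?thesis using alg_iso_bouquet[OF A, of v V hh tt] ends by (simp add: betti1_def)
  next
    case False
    then obtain e where e: "e \<in> A" and nonloop: "tt e \<noteq> hh e" by blast
    let ?\<phi> = "collapse (hh e) (tt e)"
    have ends_e: "tt e \<in> V" "hh e \<in> V" using ends e by auto
    have "card (V - {hh e}) < card V" by (rule card_Diff1_less[OF V ends_e(2)])
    moreover have "finite (V - {hh e})" "finite (A - {e})" using V A by simp_all
    moreover have "\<forall>a\<in>A - {e}. (?\<phi> \<circ> hh) a \<in> V - {hh e} \<and> (?\<phi> \<circ> tt) a \<in> V - {hh e}"
      using collapse_ends[OF ends ends_e(1) nonloop] by blast
    moreover have "quiver_connected (V - {hh e}) (A - {e}) (?\<phi> \<circ> hh) (?\<phi> \<circ> tt)"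
      using conn e ends nonloop by (rule quiver_connected_collapse)
    ultimately have IH: "alg_iso (quiver_invariants (V - {hh e}) (A - {e}) (?\<phi> \<circ> hh) (?\<phi> \<circ> tt))
        (R_inv (A - {e}) :: ('a \<Rightarrow> complex^'n^'n) set)
        (character_invariants (betti1 (V - {hh e}) (A - {e})))
        (hom_free (betti1 (V - {hh e}) (A - {e})) :: (nat \<Rightarrow> complex^'n^'n) set)"
      by (rule less.hyps)
    show ?thesis
      using alg_iso_trans[OF alg_iso_contract_arrow[OF e nonloop ends] IH]
      by (simp add: betti1_remove[OF V A e ends_e nonloop])
  qed
qed

end
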